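(* Let $D\ge 2$, $\eta=\mathrm{diag}(-1,1,\dots,1)$, and let $g_{\mu\nu}$, $f_{\mu\nu}$ be real symmetric invertible $D\times D$ matrices of Lorentzian signature $(-,+,\dots,+)$, with inverses $g^{\mu\nu}$, $f^{\mu\nu}$. Then there exist real matrices $e_A{}^\mu$ and $L^B{}_\nu$ with $\eta^{AB}e_A{}^\mu e_B{}^\nu=g^{\mu\nu}$ and $\eta_{AB}L^A{}_\mu L^B{}_\nu=f_{\mu\nu}$ such that $e_A{}^\mu L_{B\mu}=e_B{}^\mu L_{A\mu}$ for all $A,B$, if and only if there exists a real matrix $\gamma$ such that (i) $\gamma^\mu{}_\rho\gamma^\rho{}_\nu=g^{\mu\rho}f_{\rho\nu}$ (i.e. $\gamma^2=g^{-1}f$), and (ii) the matrix $f\gamma$ is symmetric.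
   Context: Greek indices are space-time indices and capital Latin indices are Lorentz indices, lowered and raised with $\eta_{AB}$ and $\eta^{AB}$ (so $L_{B\mu}=\eta_{BC}L^C{}_\mu$); repeated indices are summed. *)

theory Defs
  imports "HOL-Analysis.Analysis"
begin

definition minkowski :: "'n \<Rightarrow> real^'n^'n" where
  "minkowski t0 = (\<chi> i j. if i = j then (if i = t0 then -1 else 1) else 0)"

definition symmetric_mat :: "real^'n^'n \<Rightarrow> bool" where
  "symmetric_mat M \<longleftrightarrow> transpose M = M"

text \<open>Lorentzian signature (-,+,...,+): real symmetric invertible matrix congruent
  (Sylvester's law of inertia) to diag(-1,1,...,1).\<close>
definition lorentzian :: "'n \<Rightarrow> real^'n^'n \<Rightarrow> bool" where
  "lorentzian t0 M \<longleftrightarrow> symmetric_mat M \<and> invertible M \<and>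
     (\<exists>P::real^'n^'n. invertible P \<and> transpose P ** M ** P = minkowski t0)"

end

theory Submission
  imports Defs
begin

text \<open>Given a symmetric frame pair, \<open>\<gamma> = e\<^sup>T L\<close> works: the symmetry condition says
  \<open>\<eta> L e\<^sup>T = e L\<^sup>T \<eta>\<close>, which lets \<open>L e\<^sup>T\<close> in \<open>\<gamma>\<^sup>2 = e\<^sup>T (L e\<^sup>T) L\<close> be replaced by
  \<open>\<eta> e L\<^sup>T \<eta>\<close>, and exhibits \<open>f \<gamma> = L\<^sup>T (\<eta> L e\<^sup>T) L\<close> as a congruent image of a symmetric matrix.
  Conversely, for \<open>f = Q\<^sup>T \<eta> Q\<close> take \<open>L = Q\<close> and \<open>e = (\<gamma> Q\<^sup>-\<^sup>1)\<^sup>T\<close>: then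
  \<open>e\<^sup>T \<eta> e = \<gamma> f\<^sup>-\<^sup>1 \<gamma>\<^sup>T\<close>, and symmetry of \<open>f \<gamma>\<close> means \<open>\<gamma> f\<^sup>-\<^sup>1 = f\<^sup>-\<^sup>1 \<gamma>\<^sup>T\<close>, so this is
  \<open>\<gamma>\<^sup>2 f\<^sup>-\<^sup>1 = g\<^sup>-\<^sup>1\<close>.\<close>

lemma minkowski_mult_self: "minkowski t0 ** minkowski t0 = (mat 1 :: real^'n^'n)"
proof -
  define s :: "'n \<Rightarrow> real" where "s i = (if i = t0 then -1 else 1)" for i
  have eta: "minkowski t0 = (\<chi> i j. if i = j then s i else 0)"
    unfolding minkowski_def s_def by simp
  have "(\<Sum>k\<in>UNIV. (if i = k then s i else 0) * (if k = j then s k else 0))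
      = (if i = j then 1 else 0)" for i j
  proof -
    have "(\<lambda>k. (if i = k then s i else 0) * (if k = j then s k else 0))
        = (\<lambda>k. if i = k then s i * (if k = j then s k else 0) else 0)"
      by auto
    moreover have "s i * s i = 1" by (simp add: s_def)
    ultimately show ?thesis by (simp only: sum.delta finite UNIV_I if_True) auto
  qed
  then show ?thesis unfolding eta matrix_matrix_mult_def mat_def by (simp add: vec_eq_iff)
qed

lemma transpose_minkowski: "transpose (minkowski t0) = (minkowski t0 :: real^'n^'n)"
  unfolding minkowski_def transpose_def by (simp add: vec_eq_iff)

lemma symmetric_mat_congruence:
  fixes M P :: "real^'n^'n"
  assumes "symmetric_mat M"
  shows "symmetric_mat (transpose P ** M ** P)"
  using assms unfolding symmetric_mat_def by (simp add: matrix_transpose_mul matrix_mul_assoc)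

lemma symmetric_mat_transpose_iff:
  fixes M :: "real^'n^'n"
  shows "symmetric_mat (transpose M) \<longleftrightarrow> symmetric_mat M"
  unfolding symmetric_mat_def by (metis transpose_transpose)

lemma lorentzian_congruent_minkowski:
  assumes "lorentzian t0 f"
  obtains Q :: "real^'n^'n" where "invertible Q" and "f = transpose Q ** minkowski t0 ** Q"
proof -
  obtain P :: "real^'n^'n" where "invertible P" and PfP: "transpose P ** f ** P = minkowski t0"
    using assms unfolding lorentzian_def by blast
  then obtain Q where PQ: "P ** Q = mat 1" and QP: "Q ** P = mat 1"
    unfolding invertible_def by blast
  have "transpose Q ** minkowski t0 ** Q = (transpose Q ** transpose P) ** f ** (P ** Q)"
    unfolding PfP[symmetric] by (simp add: matrix_mul_assoc)
  also have "\<dots> = f"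
    using PQ QP by (metis matrix_transpose_mul transpose_mat matrix_mul_lid matrix_mul_rid)
  finally show thesis
    using QP PQ by (intro that[of Q]) (auto simp: invertible_def)
qed

lemma symmetric_frames_square_root:
  fixes e L H :: "real^'n^'n"
  assumes H_sym: "transpose H = H" and H_inv: "H ** H = mat 1"
    and frames_sym: "symmetric_mat (e ** transpose (H ** L))"
  defines "\<gamma> \<equiv> transpose e ** L"
  shows "\<gamma> ** \<gamma> = (transpose e ** H ** e) ** (transpose L ** H ** L)"
    and "symmetric_mat ((transpose L ** H ** L) ** \<gamma>)"
proof -
  have swap: "H ** L ** transpose e = e ** transpose L ** H"
    using frames_sym unfolding symmetric_mat_def
    by (simp add: matrix_transpose_mul H_sym matrix_mul_assoc)
  have "L ** transpose e = H ** (H ** L ** transpose e)"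
    by (simp add: matrix_mul_assoc H_inv)
  also have "\<dots> = H ** e ** transpose L ** H"
    unfolding swap by (simp add: matrix_mul_assoc)
  finally have L_e: "L ** transpose e = H ** e ** transpose L ** H" .
  have "\<gamma> ** \<gamma> = transpose e ** (L ** transpose e) ** L"
    unfolding \<gamma>_def by (simp add: matrix_mul_assoc)
  then show "\<gamma> ** \<gamma> = (transpose e ** H ** e) ** (transpose L ** H ** L)"
    unfolding L_e by (simp add: matrix_mul_assoc)
  have "(transpose L ** H ** L) ** \<gamma>
      = transpose L ** transpose (e ** transpose (H ** L)) ** L"
    unfolding \<gamma>_def by (simp add: matrix_transpose_mul H_sym matrix_mul_assoc)
  then show "symmetric_mat ((transpose L ** H ** L) ** \<gamma>)"
    using frames_sym by (simp add: symmetric_mat_congruence symmetric_mat_transpose_iff)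
qed

lemma square_root_symmetric_frames:
  fixes L H G \<gamma> :: "real^'n^'n"
  assumes H_sym: "transpose H = H" and H_inv: "H ** H = mat 1" and "invertible L"
    and root: "\<gamma> ** \<gamma> = G ** (transpose L ** H ** L)"
    and root_sym: "symmetric_mat ((transpose L ** H ** L) ** \<gamma>)"
  shows "\<exists>e. transpose e ** H ** e = G \<and> symmetric_mat (e ** transpose (H ** L))"
proof -
  define F where "F = transpose L ** H ** L"
  obtain P where LP: "L ** P = mat 1" and PL: "P ** L = mat 1"
    using \<open>invertible L\<close> unfolding invertible_def by blast
  define K where "K = P ** H ** transpose P"
  have PLt: "transpose P ** transpose L = mat 1" and LPt: "transpose L ** transpose P = mat 1"
    using LP PL by (metis matrix_transpose_mul transpose_mat)+
  have FK: "F ** K = mat 1"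
  proof -
    have "F ** K = transpose L ** (H ** (L ** P) ** H) ** transpose P"
      unfolding F_def K_def by (simp add: matrix_mul_assoc)
    then show ?thesis using LP LPt H_inv by simp
  qed
  then have KF: "K ** F = mat 1" using matrix_left_right_inverse by blast
  have F_sym: "transpose F = F"
    unfolding F_def by (simp add: matrix_transpose_mul H_sym matrix_mul_assoc)
  have F_\<gamma>: "transpose \<gamma> ** F = F ** \<gamma>"
    using root_sym F_sym unfolding symmetric_mat_def F_def[symmetric]
    by (simp add: matrix_transpose_mul)
  have \<gamma>_K: "\<gamma> ** K = K ** transpose \<gamma>"
  proof -
    have "\<gamma> ** K = K ** (F ** \<gamma>) ** K" using KF by (simp add: matrix_mul_assoc)
    also have "\<dots> = (K ** transpose \<gamma>) ** (F ** K)" unfolding F_\<gamma>[symmetric]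
      by (simp add: matrix_mul_assoc)
    finally show ?thesis using FK by simp
  qed
  define e where "e = transpose (\<gamma> ** P)"
  have "transpose e ** H ** e = \<gamma> ** (K ** transpose \<gamma>)"
    unfolding e_def K_def by (simp add: matrix_transpose_mul matrix_mul_assoc)
  also have "\<dots> = (\<gamma> ** \<gamma>) ** K" unfolding \<gamma>_K[symmetric] by (simp add: matrix_mul_assoc)
  also have "\<dots> = G ** (F ** K)" unfolding root F_def by (simp add: matrix_mul_assoc)
  also have "\<dots> = G" using FK by simp
  finally have metric: "transpose e ** H ** e = G" .
  have LtH: "transpose L ** H = F ** P"
    unfolding F_def using LP by (metis matrix_mul_assoc matrix_mul_rid)
  have "e ** transpose (H ** L) = transpose P ** (F ** \<gamma>) ** P"
    unfolding e_def F_\<gamma>[symmetric] by (simp add: matrix_transpose_mul H_sym LtH matrix_mul_assoc)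
  then have "symmetric_mat (e ** transpose (H ** L))"
    using root_sym unfolding F_def by (simp add: symmetric_mat_congruence)
  with metric show ?thesis by blast
qed

theorem proposition3:
  fixes t0 :: "'n::finite" and g f :: "real^'n^'n"
  assumes "CARD('n) \<ge> 2"
    and "lorentzian t0 g" and "lorentzian t0 f"
  shows "(\<exists>e L :: real^'n^'n.
            transpose e ** minkowski t0 ** e = matrix_inv g \<and>
            transpose L ** minkowski t0 ** L = f \<and>
            symmetric_mat (e ** transpose (minkowski t0 ** L)))
         \<longleftrightarrow>
         (\<exists>\<gamma> :: real^'n^'n. \<gamma> ** \<gamma> = matrix_inv g ** f \<and> symmetric_mat (f ** \<gamma>))"
    (is "?frames \<longleftrightarrow> ?root")
proof
  assume ?frames
  then obtain e L :: "real^'n^'n" where "transpose e ** minkowski t0 ** e = matrix_inv g"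
    and "transpose L ** minkowski t0 ** L = f"
    and "symmetric_mat (e ** transpose (minkowski t0 ** L))"
    by blast
  then show ?root
    using symmetric_frames_square_root[OF transpose_minkowski minkowski_mult_self] by metis
next
  assume ?root
  then obtain \<gamma> :: "real^'n^'n" where "\<gamma> ** \<gamma> = matrix_inv g ** f" and "symmetric_mat (f ** \<gamma>)"
    by blast
  moreover obtain L :: "real^'n^'n" where "invertible L"
    and f: "f = transpose L ** minkowski t0 ** L"
    using lorentzian_congruent_minkowski[OF \<open>lorentzian t0 f\<close>] by blast
  ultimately show ?frames
    using square_root_symmetric_frames[OF transpose_minkowski minkowski_mult_self] by metis
qed

end
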